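(* Let $\Lambda$ be a finite-dimensional algebra over a field of characteristic $p>0$, and let ${\bf T}(\Lambda)=\Lambda\ltimes\Lambda^*$ be its trivial extension. (1) $T_0({\bf T}(\Lambda))^\perp=Z({\bf T}(\Lambda))=Z(\Lambda)\ltimes \operatorname{Ann}_{\Lambda^*}(K(\Lambda))$. (2) For all $n\ge 1$, $T_n({\bf T}(\Lambda))^{\perp} = 0 \ltimes \operatorname{Ann}_{\Lambda^*}(T_n(\Lambda))$. (3) For all $n\ge 1$, $T_n(Z({\bf T}(\Lambda)))^\perp/K({\bf T}(\Lambda))= 0\ltimes \left(\operatorname{Ann}_{\Lambda^*}(T_n(Z(\Lambda)))/[\Lambda,\Lambda^*]\right)$. (4) For all $n\ge 1$, $P_n(Z({\bf T}(\Lambda)))^\perp/K({\bf T}(\Lambda))= \Lambda/K(\Lambda)\ltimes \left(\operatorname{Ann}_{\Lambda^*}(P_n(Z(\Lambda)))/[\Lambda,\Lambda^*]\right)$.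
   Context: For a finite-dimensional algebra $A$ over a field $k$ of characteristic $p>0$: $K(A)$ is the $k$-subspace spanned by all commutators $ab-ba$, $Z(A)$ is the center, and $T_n(A)=\{x\in A\mid x^{p^n}\in K(A)\}$ for $n\ge 0$ (so $T_0(A)=K(A)$). For $\Lambda$ finite-dimensional, $\Lambda^*=\operatorname{Hom}_k(\Lambda,k)$ is a $\Lambda$-$\Lambda$-bimodule via $(a\varphi)(b)=\varphi(ba)$, $(\varphi a)(b)=\varphi(ab)$; the trivial extension ${\bf T}(\Lambda)=\Lambda\ltimes\Lambda^*$ has multiplication $(a,\varphi)(b,\psi)=(ab,a\psi+\varphi b)$ and is a symmetric algebra with symmetrizing form $\langle (a,\varphi),(b,\psi)\rangle=\psi(a)+\varphi(b)$ (coming from $\pi(a,\varphi)=\varphi(1)$). For a subspace $M$ of ${\bf T}(\Lambda)$, $M^\perp$ denotes its orthogonal space with respect to this form. For a subspace $V\le\Lambda$, $\operatorname{Ann}_{\Lambda^*}(V)=\{\varphi\in\Lambda^*\mid \varphi(V)=0\}$. $[\Lambda,\Lambda^*]$ is the subspace of $\Lambda^*$ spanned by all $a\varphi-\varphi a$ with $a\in\Lambda$, $\varphi\in\Lambda^*$. For a commutative algebra $Z$, $P_n(Z)$ is the subspace spanned by all $z^{p^n}$, $z\in Z$, and $T_n(Z)=\{z\in Z\mid z^{p^n}=0\}$. In (3) and (4), $T_n(Z({\bf T}(\Lambda)))^\perp$ and $P_n(Z({\bf T}(\Lambda)))^\perp$ are orthogonal spaces in ${\bf T}(\Lambda)$ (they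 contain $K({\bf T}(\Lambda))$), and $K({\bf T}(\Lambda))=K(\Lambda)\ltimes[\Lambda,\Lambda^*]$. *)

theory Defs
  imports Complex_Main "HOL-Library.Function_Algebras" "HOL-Library.Product_Plus"
begin

definition Kc :: "('k::field \<Rightarrow> 'b::ab_group_add \<Rightarrow> 'b) \<Rightarrow> ('b \<Rightarrow> 'b \<Rightarrow> 'b) \<Rightarrow> 'b set \<Rightarrow> 'b set" where
  "Kc sc m A = module.span sc {m a b - m b a | a b. a \<in> A \<and> b \<in> A}"

definition Zc :: "('b \<Rightarrow> 'b \<Rightarrow> 'b) \<Rightarrow> 'b set \<Rightarrow> 'b set" where
  "Zc m A = {z \<in> A. \<forall>a \<in> A. m z a = m a z}"

definition apow :: "('b \<Rightarrow> 'b \<Rightarrow> 'b) \<Rightarrow> 'b \<Rightarrow> 'b \<Rightarrow> nat \<Rightarrow> 'b" where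
  "apow m one x k = (m x ^^ k) one"

definition Tc :: "('k::field \<Rightarrow> 'b::ab_group_add \<Rightarrow> 'b) \<Rightarrow> ('b \<Rightarrow> 'b \<Rightarrow> 'b) \<Rightarrow> 'b \<Rightarrow> nat \<Rightarrow> nat \<Rightarrow> 'b set \<Rightarrow> 'b set" where
  "Tc sc m one p n A = {x \<in> A. apow m one x (p ^ n) \<in> Kc sc m A}"

definition TZc :: "('b \<Rightarrow> 'b \<Rightarrow> 'b) \<Rightarrow> 'b::zero \<Rightarrow> nat \<Rightarrow> nat \<Rightarrow> 'b set \<Rightarrow> 'b set" where
  "TZc m one p n Z = {z \<in> Z. apow m one z (p ^ n) = 0}"

definition PZc :: "('k::field \<Rightarrow> 'b::ab_group_add \<Rightarrow> 'b) \<Rightarrow> ('b \<Rightarrow> 'b \<Rightarrow> 'b) \<Rightarrow> 'b \<Rightarrow> nat \<Rightarrow> nat \<Rightarrow> 'b set \<Rightarrow> 'b set" where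
  "PZc sc m one p n Z = module.span sc {apow m one z (p ^ n) | z. z \<in> Z}"

definition dual :: "('k::field \<Rightarrow> 'a::ab_group_add \<Rightarrow> 'a) \<Rightarrow> ('a \<Rightarrow> 'k) set" where
  "dual sc = {\<phi>. Vector_Spaces.linear sc ((*) :: 'k \<Rightarrow> 'k \<Rightarrow> 'k) \<phi>}"

definition TE :: "('k::field \<Rightarrow> 'a::ab_group_add \<Rightarrow> 'a) \<Rightarrow> ('a \<times> ('a \<Rightarrow> 'k)) set" where
  "TE sc = UNIV \<times> dual sc"

text \<open>(a,phi)(b,psi) = (ab, a psi + phi b), where (a psi)(x) = psi(x a), (phi b)(x) = phi(b x).\<close>
definition tmult :: "('a::ring_1 \<times> ('a \<Rightarrow> 'k::field)) \<Rightarrow> ('a \<times> ('a \<Rightarrow> 'k)) \<Rightarrow> ('a \<times> ('a \<Rightarrow> 'k))" where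
  "tmult x y = (fst x * fst y, \<lambda>t. snd y (t * fst x) + snd x (fst y * t))"

definition tone :: "('a::ring_1 \<times> ('a \<Rightarrow> 'k::field))" where
  "tone = (1, \<lambda>t. 0)"

definition tscale :: "('k::field \<Rightarrow> 'a::ab_group_add \<Rightarrow> 'a) \<Rightarrow> 'k \<Rightarrow> ('a \<times> ('a \<Rightarrow> 'k)) \<Rightarrow> ('a \<times> ('a \<Rightarrow> 'k))" where
  "tscale sc c x = (sc c (fst x), \<lambda>t. c * snd x t)"

definition tform :: "('a \<times> ('a \<Rightarrow> 'k::field)) \<Rightarrow> ('a \<times> ('a \<Rightarrow> 'k)) \<Rightarrow> 'k" where
  "tform x y = snd y (fst x) + snd x (fst y)"

definition perp :: "('k::field \<Rightarrow> 'a::ab_group_add \<Rightarrow> 'a) \<Rightarrow> ('a \<times> ('a \<Rightarrow> 'k)) set \<Rightarrow> ('a \<times> ('a \<Rightarrow> 'k)) set" where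
  "perp sc M = {x \<in> TE sc. \<forall>y \<in> M. tform x y = 0}"

definition Ann :: "('k::field \<Rightarrow> 'a::ab_group_add \<Rightarrow> 'a) \<Rightarrow> 'a set \<Rightarrow> ('a \<Rightarrow> 'k) set" where
  "Ann sc V = {\<phi> \<in> dual sc. \<forall>v \<in> V. \<phi> v = 0}"

end

theory Submission
  imports Defs
begin

text \<open>
  The form on T(\<Lambda>) is symmetric, associative and nondegenerate, so
  <x, uv - vu> = <xu - ux, v>: the orthogonal of K(T(\<Lambda>)) is the centre, and an element
  (a, \<phi>) is central iff a is central and \<phi> vanishes on commutators.

  For n \<ge> 1 each of the sets in (2)-(4) lies between (A \<times> 0) \<union> (0 \<times> D) and A \<times> D for suitable
  A \<subseteq> \<Lambda> and D \<subseteq> \<Lambda>*, because (0, \<psi>) squares to zero, (a, 0)^m = (a^m, 0), and for central a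
  the power (a, \<phi>)^m = (a^m, m \<phi>(a^(m-1) _)) loses its second component when p divides m.
  The orthogonal of such a set is {c. D c = 0} \<times> Ann(A), and the double annihilator theorem
  {c. Ann(S) c = 0} = span S identifies the first factor.
\<close>

lemma apow_0 [simp]: "apow m one x 0 = one"
  by (simp add: apow_def)

lemma apow_Suc [simp]: "apow m one x (Suc k) = m x (apow m one x k)"
  by (simp add: apow_def)

lemma apow_eq_power [simp]: "apow (*) 1 a k = (a :: 'a::monoid_mult) ^ k"
  by (induction k) simp_all

lemma tmult_Pair [simp]: "tmult (a, \<phi>) (b, \<psi>) = (a * b, \<lambda>t. \<psi> (t * a) + \<phi> (b * t))"
  by (simp add: tmult_def)

lemma tone_eq: "tone = (1, 0)"
  by (simp add: tone_def zero_fun_def)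

lemma tform_Pair [simp]: "tform (a, \<phi>) (b, \<psi>) = \<psi> a + \<phi> b"
  by (simp add: tform_def)

lemma tform_commute: "tform x y = tform y x"
  by (simp add: tform_def add.commute)

lemma tform_tmult_assoc: "tform x (tmult y z) = tform (tmult x y) z"
  by (simp add: tform_def tmult_def add.assoc)

lemma fst_apow_tmult: "fst (apow tmult tone x k) = fst x ^ k"
  by (induction k) (simp_all add: tmult_def tone_def)

lemma tmult_tone [simp]: "tmult x tone = x"
  by (cases x) (simp add: tone_def)

lemma apow_tmult_Pair_zero: "apow tmult tone (a, 0 :: 'a \<Rightarrow> 'k::field) k = ((a::'a::ring_1) ^ k, 0)"
  by (induction k) (simp_all add: tone_eq zero_fun_def)

lemma apow_tmult_zero_Pair:
  assumes "\<psi> 0 = 0" and "2 \<le> k"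
  shows "apow tmult tone ((0::'a::ring_1), \<psi> :: 'a \<Rightarrow> 'k::field) k = 0"
proof -
  obtain j where k: "k = Suc (Suc j)" using \<open>2 \<le> k\<close> by (metis add_2_eq_Suc le_Suc_ex)
  have square: "tmult (0, \<psi>) (0, \<psi>) = (0 :: 'a \<times> ('a \<Rightarrow> 'k))"
    using assms(1) by (simp add: zero_prod_def zero_fun_def)
  show ?thesis
  proof (unfold k, induction j)
    case 0 then show ?case using square by (simp add: tone_eq zero_fun_def)
  next
    case (Suc j) then show ?case by (simp add: zero_prod_def zero_fun_def assms(1))
  qed
qed

lemma apow_tmult_central_Suc:
  assumes "\<And>t. t * a = a * t"
  shows "apow tmult tone (a, \<phi>) (Suc k)
           = (a ^ Suc k, \<lambda>t. of_nat (Suc k) * (\<phi> :: 'a::ring_1 \<Rightarrow> 'k::field) (a ^ k * t))"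
proof (induction k)
  case 0 then show ?case by (simp add: tone_def)
next
  case (Suc k)
  have "a ^ k * (t * a) = a ^ Suc k * t" for t
    by (metis assms mult.assoc power_Suc2)
  then show ?case using Suc by (simp add: fun_eq_iff algebra_simps)
qed

lemma apow_tmult_central_of_nat_eq_0:
  assumes "\<And>t. t * a = a * t" and "of_nat m = (0::'k::field)"
  shows "apow tmult tone (a, \<phi> :: 'a::ring_1 \<Rightarrow> 'k) m = (a ^ m, 0)"
proof (cases m)
  case 0 then show ?thesis by (simp add: tone_eq)
next
  case (Suc k)
  then have "of_nat (Suc k) = (0::'k)" using assms(2) by simp
  then show ?thesis
    by (simp add: Suc apow_tmult_central_Suc[OF assms(1)] zero_fun_def del: apow_Suc of_nat_Suc)
qed

lemma vector_space_field: "vector_space ((*) :: 'k::field \<Rightarrow> 'k \<Rightarrow> 'k)"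
  by unfold_locales (auto simp: algebra_simps)

locale field_algebra = vector_space scale for scale :: "'k::field \<Rightarrow> 'a::ring_1 \<Rightarrow> 'a" +
  assumes scale_mult_left: "scale c (a * b) = scale c a * b"
    and scale_mult_right: "scale c (a * b) = a * scale c b"
begin

lemma dual_module_hom: "\<phi> \<in> dual scale \<Longrightarrow> module_hom scale (*) \<phi>"
  by (simp add: dual_def module_hom_iff_linear)

lemma dual_add: "\<phi> \<in> dual scale \<Longrightarrow> \<phi> (x + y) = \<phi> x + \<phi> y"
  using module_hom.add[OF dual_module_hom] by blast

lemma dual_scale: "\<phi> \<in> dual scale \<Longrightarrow> \<phi> (scale c x) = c * \<phi> x"
  using module_hom.scale[OF dual_module_hom] by blast

lemma dual_zero: "\<phi> \<in> dual scale \<Longrightarrow> \<phi> 0 = 0"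
  using module_hom.zero[OF dual_module_hom] by blast

lemma dual_diff: "\<phi> \<in> dual scale \<Longrightarrow> \<phi> (x - y) = \<phi> x - \<phi> y"
  using module_hom.diff[OF dual_module_hom] by blast

lemma dualI:
  assumes "\<And>x y. \<phi> (x + y) = \<phi> x + \<phi> y" and "\<And>c x. \<phi> (scale c x) = c * \<phi> x"
  shows "\<phi> \<in> dual scale"
  using assms vector_space_axioms vector_space_field
  by (simp add: dual_def module_hom_iff_linear[symmetric] module_hom_iff module_iff_vector_space)

lemma zero_in_dual: "0 \<in> dual scale"
  by (rule dualI) simp_all

lemma Ann_span: "Ann scale (span S) = Ann scale S"
proof (intro set_eqI iffI)
  fix \<phi> assume \<phi>: "\<phi> \<in> Ann scale S"
  have "\<phi> x = 0" if "x \<in> span S" for x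
    using that
  proof (induction rule: span_induct_alt)
    case base show ?case using \<phi> by (simp add: Ann_def dual_zero)
  next
    case (step c x y) then show ?case using \<phi> by (simp add: Ann_def dual_add dual_scale)
  qed
  then show "\<phi> \<in> Ann scale (span S)" using \<phi> by (simp add: Ann_def)
qed (auto simp: Ann_def span_base)

lemma dual_separates_from_span:
  assumes "x \<notin> span S"
  shows "\<exists>\<phi>\<in>Ann scale S. \<phi> x \<noteq> 0"
proof -
  interpret pair: vector_space_pair scale "(*) :: 'k \<Rightarrow> 'k \<Rightarrow> 'k"
    unfolding vector_space_pair_def using vector_space_axioms vector_space_field by blast
  obtain B where B: "B \<subseteq> span S" "independent B" "span S \<subseteq> span B"
    by (rule basis_exists)
  have "span B \<subseteq> span S" using span_mono[OF B(1)] by (simp add: span_span)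
  then have x: "x \<notin> span B" using assms by blast
  have indep: "independent (insert x B)"
    using independent_insertI[OF x B(2)] .
  define \<phi> where "\<phi> = pair.construct (insert x B) (\<lambda>y. if y = x then 1 else 0)"
  have \<phi>: "\<phi> \<in> dual scale"
    unfolding dual_def \<phi>_def using pair.linear_construct[OF indep] by simp
  have "\<phi> b = 0" if "b \<in> B" for b
    using that x span_base[OF that] pair.construct_basis[OF indep] by (auto simp: \<phi>_def)
  then have "\<phi> \<in> Ann scale B" using \<phi> by (simp add: Ann_def)
  then have "\<phi> \<in> Ann scale (span B)" by (simp only: Ann_span)
  then have "\<phi> \<in> Ann scale S" using B(3) span_superset by (auto simp: Ann_def)
  moreover have "\<phi> x = 1" using pair.construct_basis[OF indep] by (simp add: \<phi>_def)
  ultimately show ?thesis by force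
qed

lemma double_annihilator: "{x. \<forall>\<phi>\<in>Ann scale S. \<phi> x = 0} = span S"
proof (intro set_eqI iffI)
  fix x assume x: "x \<in> span S"
  have "\<phi> x = 0" if "\<phi> \<in> Ann scale S" for \<phi>
    using that x unfolding Ann_span[of S, symmetric] by (simp add: Ann_def)
  then show "x \<in> {x. \<forall>\<phi>\<in>Ann scale S. \<phi> x = 0}" by blast
qed (use dual_separates_from_span in blast)

lemma Pair_in_TE [simp]: "(a, \<phi>) \<in> TE scale \<longleftrightarrow> \<phi> \<in> dual scale"
  by (simp add: TE_def)

lemma tmult_in_TE: "x \<in> TE scale \<Longrightarrow> y \<in> TE scale \<Longrightarrow> tmult x y \<in> TE scale"
  by (cases x, cases y)
    (auto intro!: dualI simp: dual_add dual_scale algebra_simps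
      scale_mult_left[symmetric] scale_mult_right[symmetric])

lemma diff_in_TE: "x \<in> TE scale \<Longrightarrow> y \<in> TE scale \<Longrightarrow> x - y \<in> TE scale"
  by (cases x, cases y) (auto intro!: dualI simp: dual_add dual_scale algebra_simps)

sublocale T: module "tscale scale"
  by unfold_locales (auto simp: tscale_def fun_eq_iff algebra_simps scale_right_distrib scale_left_distrib)

lemma tform_diff_left: "z \<in> TE scale \<Longrightarrow> tform (x - y) z = tform x z - tform y z"
  by (cases z) (simp add: tform_def dual_diff)

lemma tform_diff_right: "x \<in> TE scale \<Longrightarrow> tform x (y - z) = tform x y - tform x z"
  using tform_diff_left tform_commute by metis

lemma tform_commutator:
  assumes "x \<in> TE scale" and "v \<in> TE scale"
  shows "tform x (tmult u v - tmult v u) = tform (tmult x u - tmult u x) v"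
  using assms
  by (simp add: tform_diff_left tform_diff_right tform_tmult_assoc)
    (metis tform_commute tform_tmult_assoc)

lemma perp_Times:
  assumes "0 \<in> A" and "0 \<in> D"
  shows "perp scale (A \<times> D) = {c. \<forall>\<psi>\<in>D. \<psi> c = 0} \<times> Ann scale A"
proof (intro set_eqI iffI)
  fix x assume x: "x \<in> perp scale (A \<times> D)"
  obtain c \<chi> where xx: "x = (c, \<chi>)" by (cases x)
  have \<chi>: "\<chi> \<in> dual scale" and orth: "\<And>a \<psi>. a \<in> A \<Longrightarrow> \<psi> \<in> D \<Longrightarrow> \<psi> c + \<chi> a = 0"
    using x by (auto simp: perp_def xx)
  show "x \<in> {c. \<forall>\<psi>\<in>D. \<psi> c = 0} \<times> Ann scale A"
    using orth[OF assms(1)] orth[OF _ assms(2)] \<chi> by (simp add: xx Ann_def dual_zero)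
qed (auto simp: perp_def Ann_def)

lemma dual_annihilates_only_zero: "{c. \<forall>\<psi>\<in>dual scale. \<psi> c = 0} = {0}"
  using double_annihilator[of "{}"] by (simp add: Ann_def)

lemma perp_TE: "perp scale (TE scale) = {0}"
proof -
  have "Ann scale UNIV = {0}"
    by (auto simp: Ann_def zero_in_dual)
  then show ?thesis
    using dual_annihilates_only_zero perp_Times[of UNIV "dual scale"] by (simp add: TE_def zero_in_dual zero_prod_def)
qed

lemma perp_antimono: "M \<subseteq> N \<Longrightarrow> perp scale N \<subseteq> perp scale M"
  by (auto simp: perp_def)

lemma perp_sandwich_Times:
  assumes "A \<times> {0} \<subseteq> M" and "{0} \<times> D \<subseteq> M" and "M \<subseteq> A \<times> D"
    and "0 \<in> A" and "0 \<in> D"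
  shows "perp scale M = {c. \<forall>\<psi>\<in>D. \<psi> c = 0} \<times> Ann scale A"
proof -
  have "perp scale M \<subseteq> perp scale (A \<times> D)"
  proof
    fix x assume x: "x \<in> perp scale M"
    obtain c \<chi> where xx: "x = (c, \<chi>)" by (cases x)
    have "\<psi> c + \<chi> a = 0" if "a \<in> A" "\<psi> \<in> D" for a \<psi>
    proof -
      have "tform x (a, 0) = 0" "tform x (0, \<psi>) = 0"
        using x assms(1,2) that by (auto simp: perp_def)
      then show ?thesis using x by (simp add: xx perp_def dual_zero)
    qed
    then show "x \<in> perp scale (A \<times> D)" using x by (auto simp: perp_def xx)
  qed
  moreover have "perp scale (A \<times> D) \<subseteq> perp scale M"
    using assms(3) by (rule perp_antimono)
  ultimately show ?thesis using perp_Times[OF assms(4,5)] by blast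
qed

lemma perp_span: "perp scale (T.span G) = perp scale G"
proof (intro set_eqI iffI)
  fix x assume x: "x \<in> perp scale G"
  then have xTE: "x \<in> TE scale" by (simp add: perp_def)
  have "tform x y = 0" if "y \<in> T.span G" for y
    using that
  proof (induction rule: T.span_induct_alt)
    case base then show ?case using xTE by (cases x) (simp add: zero_prod_def dual_zero)
  next
    case (step c g y)
    obtain a \<chi> where xx: "x = (a, \<chi>)" by (cases x)
    have "tform x (tscale scale c g + y) = c * tform x g + tform x y"
      using xTE by (simp add: xx tform_def tscale_def dual_add dual_scale algebra_simps)
    then show ?case using x step by (simp add: perp_def)
  qed
  then show "x \<in> perp scale (T.span G)" using xTE by (simp add: perp_def)
qed (auto simp: perp_def T.span_base)

lemma perp_commutators:
  "perp scale {tmult u v - tmult v u | u v. u \<in> TE scale \<and> v \<in> TE scale} = Zc tmult (TE scale)"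
proof (intro set_eqI iffI)
  fix x assume x: "x \<in> perp scale {tmult u v - tmult v u | u v. u \<in> TE scale \<and> v \<in> TE scale}"
  then have xTE: "x \<in> TE scale" by (simp add: perp_def)
  have "tmult x u = tmult u x" if u: "u \<in> TE scale" for u
  proof -
    have "tform (tmult x u - tmult u x) v = 0" if v: "v \<in> TE scale" for v
    proof -
      have "tmult u v - tmult v u \<in> {tmult u v - tmult v u | u v. u \<in> TE scale \<and> v \<in> TE scale}"
        using u v by blast
      then have "tform x (tmult u v - tmult v u) = 0" using x unfolding perp_def by blast
      then show ?thesis using tform_commutator[OF xTE v] by simp
    qed
    moreover have "tmult x u - tmult u x \<in> TE scale"
      using u xTE by (intro diff_in_TE tmult_in_TE)
    ultimately have "tmult x u - tmult u x \<in> perp scale (TE scale)" by (simp add: perp_def)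
    then show ?thesis by (simp add: perp_TE)
  qed
  then show "x \<in> Zc tmult (TE scale)" using xTE by (simp add: Zc_def)
next
  fix x assume x: "x \<in> Zc tmult (TE scale)"
  then have xTE: "x \<in> TE scale" by (simp add: Zc_def)
  have "tform x (tmult u v - tmult v u) = 0" if "u \<in> TE scale" "v \<in> TE scale" for u v
  proof -
    have "tmult x u - tmult u x = 0" using x that by (simp add: Zc_def del: tmult_Pair)
    then show ?thesis
      using tform_commutator[OF xTE \<open>v \<in> TE scale\<close>] \<open>v \<in> TE scale\<close>
      by (cases v) (simp add: zero_prod_def dual_zero)
  qed
  then show "x \<in> perp scale {tmult u v - tmult v u | u v. u \<in> TE scale \<and> v \<in> TE scale}"
    using xTE by (auto simp: perp_def)
qed

lemma Zc_TE: "Zc tmult (TE scale) = Zc (*) UNIV \<times> Ann scale (Kc scale (*) UNIV)"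
proof -
  have central_iff: "(a, \<phi>) \<in> Zc tmult (TE scale) \<longleftrightarrow>
      \<phi> \<in> dual scale \<and> (\<forall>b. a * b = b * a) \<and> (\<forall>b t. \<phi> (b * t) = \<phi> (t * b))" for a \<phi>
  proof
    assume z: "(a, \<phi>) \<in> Zc tmult (TE scale)"
    have "tmult (a, \<phi>) (b, 0) = tmult (b, 0) (a, \<phi>)" for b
      using z zero_in_dual by (simp add: Zc_def del: tmult_Pair)
    then have "a * b = b * a \<and> \<phi> (b * t) = \<phi> (t * b)" for b t
      by (simp add: fun_eq_iff)
    moreover have "\<phi> \<in> dual scale" using z by (simp add: Zc_def)
    ultimately show "\<phi> \<in> dual scale \<and> (\<forall>b. a * b = b * a) \<and> (\<forall>b t. \<phi> (b * t) = \<phi> (t * b))"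
      by blast
  next
    assume a\<phi>: "\<phi> \<in> dual scale \<and> (\<forall>b. a * b = b * a) \<and> (\<forall>b t. \<phi> (b * t) = \<phi> (t * b))"
    have "tmult (a, \<phi>) (b, \<psi>) = tmult (b, \<psi>) (a, \<phi>)" for b \<psi>
      using a\<phi> by (simp add: fun_eq_iff add.commute)
    then show "(a, \<phi>) \<in> Zc tmult (TE scale)"
      using a\<phi> by (auto simp: Zc_def)
  qed
  have Ann_K_iff: "\<phi> \<in> Ann scale (Kc scale (*) UNIV) \<longleftrightarrow>
      \<phi> \<in> dual scale \<and> (\<forall>b t. \<phi> (b * t) = \<phi> (t * b))" for \<phi>
  proof -
    have "\<phi> \<in> Ann scale (Kc scale (*) UNIV) \<longleftrightarrow>
        \<phi> \<in> dual scale \<and> (\<forall>b t. \<phi> (b * t - t * b) = 0)"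
      unfolding Kc_def Ann_span by (auto simp: Ann_def)
    then show ?thesis by (auto simp: dual_diff)
  qed
  show ?thesis
    by (auto simp: central_iff Ann_K_iff) (auto simp: Zc_def)
qed

lemma module_hom_fst: "module_hom (tscale scale) scale fst"
  by (simp add: module_hom_def module_hom_axioms_def T.module_axioms module_axioms tscale_def)

lemma module_hom_Pair_zero: "module_hom scale (tscale scale) (\<lambda>a. (a, 0))"
  by (simp add: module_hom_def module_hom_axioms_def T.module_axioms module_axioms tscale_def
      zero_fun_def)

lemma fst_image_Kc_TE: "fst ` Kc (tscale scale) tmult (TE scale) \<subseteq> Kc scale (*) UNIV"
  unfolding Kc_def module_hom.span_image[OF module_hom_fst, symmetric]
  by (rule span_mono) (auto simp: tmult_def, blast)

lemma Kc_times_zero_subset: "Kc scale (*) UNIV \<times> {0} \<subseteq> Kc (tscale scale) tmult (TE scale)"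
proof -
  have "(\<lambda>a. (a, 0)) ` {a * b - b * a |a b. a \<in> UNIV \<and> b \<in> UNIV}
      \<subseteq> {tmult u v - tmult v u | u v. u \<in> TE scale \<and> v \<in> TE scale}"
  proof
    fix x :: "'a \<times> ('a \<Rightarrow> 'k)" assume "x \<in> (\<lambda>a. (a, 0)) ` {a * b - b * a |a b. a \<in> UNIV \<and> b \<in> UNIV}"
    then obtain a b where "x = (a * b - b * a, 0)" by blast
    then have "x = tmult (a, 0) (b, 0) - tmult (b, 0) (a, 0)" by (simp add: zero_fun_def)
    moreover have "(a, 0) \<in> TE scale" "(b, 0) \<in> TE scale" using zero_in_dual by simp_all
    ultimately show "x \<in> {tmult u v - tmult v u | u v. u \<in> TE scale \<and> v \<in> TE scale}"
      by blast
  qed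
  then have "(\<lambda>a. (a, 0)) ` Kc scale (*) UNIV \<subseteq> Kc (tscale scale) tmult (TE scale)"
    unfolding Kc_def module_hom.span_image[OF module_hom_Pair_zero, symmetric] by (rule T.span_mono)
  then show ?thesis by auto
qed

lemma perp_T0_eq_Zc_TE: "perp scale (Tc (tscale scale) tmult tone p 0 (TE scale)) = Zc tmult (TE scale)"
proof -
  define C where "C = {tmult u v - tmult v u | u v. u \<in> TE scale \<and> v \<in> TE scale}"
  have T0: "Tc (tscale scale) tmult tone p 0 (TE scale) = TE scale \<inter> T.span C"
    by (auto simp: Tc_def Kc_def C_def)
  have "C \<subseteq> TE scale" unfolding C_def using diff_in_TE tmult_in_TE by blast
  then have "C \<subseteq> Tc (tscale scale) tmult tone p 0 (TE scale)"
    unfolding T0 using T.span_superset by blast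
  then have "perp scale (Tc (tscale scale) tmult tone p 0 (TE scale)) \<subseteq> perp scale C"
    by (rule perp_antimono)
  moreover have "perp scale (T.span C) \<subseteq> perp scale (Tc (tscale scale) tmult tone p 0 (TE scale))"
    unfolding T0 by (rule perp_antimono) blast
  ultimately show ?thesis
    using perp_commutators perp_span[of C] by (simp add: C_def)
qed

lemma perp_Tn:
  assumes "2 \<le> p ^ n"
  shows "perp scale (Tc (tscale scale) tmult tone p n (TE scale))
      = {0} \<times> Ann scale (Tc scale (*) 1 p n UNIV)"
proof -
  have "perp scale (Tc (tscale scale) tmult tone p n (TE scale))
      = {c. \<forall>\<psi>\<in>dual scale. \<psi> c = 0} \<times> Ann scale (Tc scale (*) 1 p n UNIV)"
  proof (rule perp_sandwich_Times)
    show "Tc scale (*) 1 p n UNIV \<times> {0} \<subseteq> Tc (tscale scale) tmult tone p n (TE scale)"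
      using Kc_times_zero_subset zero_in_dual by (auto simp: Tc_def apow_tmult_Pair_zero)
    show "{0} \<times> dual scale \<subseteq> Tc (tscale scale) tmult tone p n (TE scale)"
      using assms by (auto simp: Tc_def Kc_def apow_tmult_zero_Pair dual_zero T.span_zero)
    show "Tc (tscale scale) tmult tone p n (TE scale) \<subseteq> Tc scale (*) 1 p n UNIV \<times> dual scale"
      using fst_image_Kc_TE by (force simp: Tc_def TE_def fst_apow_tmult)
    have "(0::'a) ^ p ^ n = 0" using assms by (intro zero_power) linarith
    then show "(0::'a) \<in> Tc scale (*) 1 p n UNIV"
      by (simp add: Tc_def Kc_def span_zero)
  qed (rule zero_in_dual)
  then show ?thesis by (simp add: dual_annihilates_only_zero)
qed

lemma perp_TZn:
  assumes "2 \<le> p ^ n"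
  shows "perp scale (TZc tmult tone p n (Zc tmult (TE scale)))
      = Kc scale (*) UNIV \<times> Ann scale (TZc (*) 1 p n (Zc (*) UNIV))"
proof -
  have zero_in_Ann: "0 \<in> Ann scale (Kc scale (*) UNIV)"
    by (simp add: Ann_def zero_in_dual)
  have zero_in_center: "(0::'a) \<in> Zc (*) UNIV"
    by (simp add: Zc_def)
  have "perp scale (TZc tmult tone p n (Zc tmult (TE scale)))
      = {c. \<forall>\<psi>\<in>Ann scale (Kc scale (*) UNIV). \<psi> c = 0} \<times> Ann scale (TZc (*) 1 p n (Zc (*) UNIV))"
  proof (rule perp_sandwich_Times)
    show "TZc (*) 1 p n (Zc (*) UNIV) \<times> {0} \<subseteq> TZc tmult tone p n (Zc tmult (TE scale))"
      using zero_in_Ann by (auto simp: TZc_def Zc_TE apow_tmult_Pair_zero zero_prod_def)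
    show "{0} \<times> Ann scale (Kc scale (*) UNIV) \<subseteq> TZc tmult tone p n (Zc tmult (TE scale))"
      using assms zero_in_center
      by (auto simp: TZc_def Zc_TE Ann_def apow_tmult_zero_Pair dual_zero)
    show "TZc tmult tone p n (Zc tmult (TE scale))
        \<subseteq> TZc (*) 1 p n (Zc (*) UNIV) \<times> Ann scale (Kc scale (*) UNIV)"
      by (auto simp: TZc_def Zc_TE) (metis fst_apow_tmult fst_conv fst_zero)
    have "(0::'a) ^ p ^ n = 0" using assms by (intro zero_power) linarith
    then show "(0::'a) \<in> TZc (*) 1 p n (Zc (*) UNIV)"
      using zero_in_center by (simp add: TZc_def)
  qed (rule zero_in_Ann)
  moreover have "{c. \<forall>\<psi>\<in>Ann scale (Kc scale (*) UNIV). \<psi> c = 0} = Kc scale (*) UNIV"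
    unfolding Kc_def Ann_span by (rule double_annihilator)
  ultimately show ?thesis by simp
qed

lemma perp_PZn:
  assumes "of_nat (p ^ n) = (0::'k)" and "0 < p"
  shows "perp scale (PZc (tscale scale) tmult tone p n (Zc tmult (TE scale)))
      = UNIV \<times> Ann scale (PZc scale (*) 1 p n (Zc (*) UNIV))"
proof -
  define P where "P = {a ^ p ^ n | a :: 'a. a \<in> Zc (*) UNIV}"
  have "{apow tmult tone z (p ^ n) | z. z \<in> Zc tmult (TE scale)} = P \<times> {0 :: 'a \<Rightarrow> 'k}"
  proof (intro set_eqI iffI)
    fix y assume "y \<in> {apow tmult tone z (p ^ n) | z. z \<in> Zc tmult (TE scale)}"
    then obtain a \<phi> where y: "y = apow tmult tone (a, \<phi>) (p ^ n)" and a: "a \<in> Zc (*) UNIV"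
      by (auto simp: Zc_TE)
    then have "t * a = a * t" for t by (simp add: Zc_def)
    then have "y = (a ^ p ^ n, 0)" using y apow_tmult_central_of_nat_eq_0 assms(1) by blast
    then show "y \<in> P \<times> {0}" using a by (auto simp: P_def)
  next
    fix y :: "'a \<times> ('a \<Rightarrow> 'k)" assume "y \<in> P \<times> {0}"
    then obtain a where "y = apow tmult tone (a, 0) (p ^ n)" and "(a, 0) \<in> Zc tmult (TE scale)"
      by (auto simp: P_def Zc_TE apow_tmult_Pair_zero Ann_def zero_in_dual)
    then show "y \<in> {apow tmult tone z (p ^ n) | z. z \<in> Zc tmult (TE scale)}" by blast
  qed
  moreover have "0 \<in> P"
  proof -
    have "(0::'a) = 0 ^ p ^ n \<and> (0::'a) \<in> Zc (*) UNIV" using assms(2) by (simp add: Zc_def zero_power)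
    then show ?thesis unfolding P_def by blast
  qed
  ultimately have "perp scale (PZc (tscale scale) tmult tone p n (Zc tmult (TE scale))) = UNIV \<times> Ann scale P"
    by (simp add: PZc_def perp_span perp_Times)
  moreover have "Ann scale P = Ann scale (PZc scale (*) 1 p n (Zc (*) UNIV))"
    by (simp add: PZc_def Ann_span P_def)
  ultimately show ?thesis by simp
qed

end

theorem theorem4p1:
  fixes scale :: "'k::field \<Rightarrow> 'a::ring_1 \<Rightarrow> 'a" and B :: "'a set" and p :: nat
  assumes fd: "finite_dimensional_vector_space scale B"
    and alg_l: "\<And>c a b. scale c (a * b) = scale c a * b"
    and alg_r: "\<And>c a b. scale c (a * b) = a * scale c b"
    and charp: "p = CHAR('k)" and ppos: "p > 0"
  shows
    "(perp scale (Tc (tscale scale) tmult tone p 0 (TE scale)) = Zc tmult (TE scale)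
     \<and> Zc tmult (TE scale) = Zc (*) UNIV \<times> Ann scale (Kc scale (*) UNIV))
   \<and> (\<forall>n\<ge>1. perp scale (Tc (tscale scale) tmult tone p n (TE scale))
            = {0} \<times> Ann scale (Tc scale (*) 1 p n UNIV))
   \<and> (\<forall>n\<ge>1. perp scale (TZc tmult tone p n (Zc tmult (TE scale)))
            = Kc scale (*) UNIV \<times> Ann scale (TZc (*) 1 p n (Zc (*) UNIV)))
   \<and> (\<forall>n\<ge>1. perp scale (PZc (tscale scale) tmult tone p n (Zc tmult (TE scale)))
            = UNIV \<times> Ann scale (PZc scale (*) 1 p n (Zc (*) UNIV)))"
proof -
  interpret field_algebra scale
    using fd alg_l alg_r
    by (simp add: field_algebra_def field_algebra_axioms_def finite_dimensional_vector_space_def)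
  have "2 \<le> p ^ n" and "of_nat (p ^ n) = (0::'k)" if "n \<ge> 1" for n
  proof -
    have "2 \<le> p" using ppos charp CHAR_not_1[where 'a = 'k] by linarith
    also have "p \<le> p ^ n" using that ppos by (simp add: self_le_power)
    finally show "2 \<le> p ^ n" .
    show "of_nat (p ^ n) = (0::'k)" using that by (simp add: charp)
  qed
  then show ?thesis
    using perp_T0_eq_Zc_TE Zc_TE perp_Tn perp_TZn perp_PZn ppos by simp
qed

end
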